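(* If $\mathcal A_i$ is a yes-instance of \textsc{Restricted Subset Sum} for some $i\in\{0,\dots,t-1\}$, then there exists a set of items $\mathcal S\subseteq\mathcal X\cup\mathcal Y\cup\mathcal Z$ with $w(\mathcal S)\le W$ and $p(\mathcal S)\ge P$.
   Context: Let $n\ge1$, $B_n=\sum_{j=1}^{3n}(3n+1)^j$, $\widetilde{\mathcal A}_n=\{(3n+1)^{j_1}+(3n+1)^{j_2}+(3n+1)^{j_3}: j_1,j_2,j_3\in\{1,\dots,3n\}\}$. A set $\mathcal A=\{a_1,\dots,a_{3n}\}$ of $3n$ integers from $\widetilde{\mathcal A}_n$ with $\sum_j a_j=3B_n$ is a yes-instance of \textsc{Restricted Subset Sum} if some $\mathcal A^*\subseteq\mathcal A$ with $|\mathcal A^*|=n$ has $\sum_{a\in\mathcal A^*}a=B_n$. Let $t$ be a power of two, $\lg$ the base-2 logarithm, and for $i\in\{0,\dots,t-1\}$ let $\mathcal A_i=\{a^i_1,\dots,a^i_{3n}\}$ be such instances. Let $X=3tnB_n$, $B=B_n+nX$, $Y=3t^2nB$, $Z=(\lg t)^2Y^2 3^{(\lg t)^2}$, $T=\sum_{k=0}^{(\lg t)^2-1}3^k$, and fix a bijection $f:\{0,\dots,\lg t-1\}^2\to\{0,\dots,(\lg t)^2-1\}$. Items (weight $w$, profit $p$): encoding items $x^i_j$ ($0\le i\le t-1$, $1\le j\le 3n$) with $w=X+a^i_j$, $p=X+a^i_j+3iB$, forming $\mathcal X$; quadratization items forming $\mathcal Y$: for $0\le k<\ell\le\lg t-1$,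 $y^{1,0}_{k,\ell}$ with $w=p=3^{f(k,\ell)}Y$, $y^{0,1}_{k,\ell}$ with $w=p=3^{f(\ell,k)}Y$, $y^{1,1}_{k,\ell}$ with $w=(3^{f(k,\ell)}+3^{f(\ell,k)})Y$, $p=w+2^{k+\ell}\cdot9nB$, and for $0\le k\le\lg t-1$, $y^{1,1}_{k,k}$ with $w=3^{f(k,k)}Y$, $p=w+2^{2k}\cdot4.5nB+2^k\cdot1.5nB$; index items forming $\mathcal Z$: for $0\le k\le\lg t-1$, $z^0_k$ with $w=p=2^kZ+\sum_{\ell=0}^{\lg t-1}3^{f(k,\ell)}Y$ and $z^1_k$ with $w=p=2^kZ+2^k\cdot 3B$. For a set $\mathcal S$ of items, $w(\mathcal S)=\sum_{x\in\mathcal S}w(x)$, $p(\mathcal S)=\sum_{x\in\mathcal S}p(x)$. Finally $W=(t-1)Z+TY+(3t-2)B$ and $P=W+\binom{t}{2}\cdot 9nB$. *)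

theory Defs
  imports Complex_Main
begin

definition Bn :: "nat \<Rightarrow> nat" where
  "Bn n = (\<Sum>j=1..3*n. (3*n+1)^j)"

definition Atilde :: "nat \<Rightarrow> nat set" where
  "Atilde n = {(3*n+1)^j1 + (3*n+1)^j2 + (3*n+1)^j3 | j1 j2 j3.
                 j1 \<in> {1..3*n} \<and> j2 \<in> {1..3*n} \<and> j3 \<in> {1..3*n}}"

definition RSS_instance :: "nat \<Rightarrow> (nat \<Rightarrow> nat) \<Rightarrow> bool" where
  "RSS_instance n a \<longleftrightarrow> inj_on a {1..3*n} \<and> (\<forall>j\<in>{1..3*n}. a j \<in> Atilde n)
      \<and> (\<Sum>j=1..3*n. a j) = 3 * Bn n"

definition RSS_yes :: "nat \<Rightarrow> (nat \<Rightarrow> nat) \<Rightarrow> bool" where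
  "RSS_yes n a \<longleftrightarrow> RSS_instance n a \<and>
      (\<exists>J. J \<subseteq> {1..3*n} \<and> card J = n \<and> (\<Sum>j\<in>J. a j) = Bn n)"

definition lg :: "nat \<Rightarrow> nat" where
  "lg t = nat \<lfloor>log 2 (real t)\<rfloor>"

definition cX :: "nat \<Rightarrow> nat \<Rightarrow> real" where
  "cX n t = 3 * real t * real n * real (Bn n)"

definition cB :: "nat \<Rightarrow> nat \<Rightarrow> real" where
  "cB n t = real (Bn n) + real n * cX n t"

definition cY :: "nat \<Rightarrow> nat \<Rightarrow> real" where
  "cY n t = 3 * (real t)^2 * real n * cB n t"

definition cZ :: "nat \<Rightarrow> nat \<Rightarrow> real" where
  "cZ n t = real ((lg t)^2) * (cY n t)^2 * 3 ^ ((lg t)^2)"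

definition cT :: "nat \<Rightarrow> real" where
  "cT t = (\<Sum>k<(lg t)^2. 3 ^ k)"

definition cW :: "nat \<Rightarrow> nat \<Rightarrow> real" where
  "cW n t = (real t - 1) * cZ n t + cT t * cY n t + (3 * real t - 2) * cB n t"

definition cP :: "nat \<Rightarrow> nat \<Rightarrow> real" where
  "cP n t = cW n t + real (t choose 2) * 9 * real n * cB n t"

datatype item =
    XI nat nat
  | Y10 nat nat
  | Y01 nat nat
  | Y11 nat nat
  | Z0 nat
  | Z1 nat

definition Xitems :: "nat \<Rightarrow> nat \<Rightarrow> item set" where
  "Xitems n t = {XI i j | i j. i < t \<and> j \<in> {1..3*n}}"

definition Yitems :: "nat \<Rightarrow> item set" where
  "Yitems t = {Y10 k l | k l. k < l \<and> l < lg t} \<union> {Y01 k l | k l. k < l \<and> l < lg t}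
     \<union> {Y11 k l | k l. k < l \<and> l < lg t} \<union> {Y11 k k | k. k < lg t}"

definition Zitems :: "nat \<Rightarrow> item set" where
  "Zitems t = {Z0 k | k. k < lg t} \<union> {Z1 k | k. k < lg t}"

fun weight :: "nat \<Rightarrow> nat \<Rightarrow> (nat \<Rightarrow> nat \<Rightarrow> nat) \<Rightarrow> (nat \<times> nat \<Rightarrow> nat) \<Rightarrow> item \<Rightarrow> real" where
  "weight n t a f (XI i j) = cX n t + real (a i j)"
| "weight n t a f (Y10 k l) = 3 ^ f (k, l) * cY n t"
| "weight n t a f (Y01 k l) = 3 ^ f (l, k) * cY n t"
| "weight n t a f (Y11 k l) =
     (if k = l then 3 ^ f (k, k) * cY n t else (3 ^ f (k, l) + 3 ^ f (l, k)) * cY n t)"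
| "weight n t a f (Z0 k) = 2 ^ k * cZ n t + (\<Sum>l<lg t. 3 ^ f (k, l) * cY n t)"
| "weight n t a f (Z1 k) = 2 ^ k * cZ n t + 2 ^ k * 3 * cB n t"

fun profit :: "nat \<Rightarrow> nat \<Rightarrow> (nat \<Rightarrow> nat \<Rightarrow> nat) \<Rightarrow> (nat \<times> nat \<Rightarrow> nat) \<Rightarrow> item \<Rightarrow> real" where
  "profit n t a f (XI i j) = cX n t + real (a i j) + 3 * real i * cB n t"
| "profit n t a f (Y10 k l) = weight n t a f (Y10 k l)"
| "profit n t a f (Y01 k l) = weight n t a f (Y01 k l)"
| "profit n t a f (Y11 k l) =
     (if k = l then weight n t a f (Y11 k k) + 2 ^ (2*k) * 4.5 * real n * cB n t
                     + 2 ^ k * 1.5 * real n * cB n t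
      else weight n t a f (Y11 k l) + 2 ^ (k + l) * 9 * real n * cB n t)"
| "profit n t a f (Z0 k) = weight n t a f (Z0 k)"
| "profit n t a f (Z1 k) = weight n t a f (Z1 k)"

end

theory Submission
  imports Defs
begin

(* Let b_k be the binary digits of the yes-instance i < t = 2^L and J its certificate. Take the
   encoding items of all instances i' > i, the items x^i_j with j in J, the index item z^(b_k)_k
   for every k, and for every pair (k, l) with b_k = 1 a quadratization item carrying 3^f(k,l) Y.
   The Y-parts of the z^0_k (rows with b_k = 0) and of the quadratization items (rows with
   b_k = 1) cover every 3^f(k,l) Y exactly once; the Z-parts give (t - 1) Z, and the B-parts
   (3 (t - i) - 2) B of the encoding items and 3 i B of the z^1_k add up to (3 t - 2) B: the
   weight is exactly W. The profit surpluses of the quadratization items are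
   4.5 n B sum_(k,l) b_k b_l 2^(k+l) + 1.5 n B sum_k b_k 2^k = 4.5 n B i^2 + 1.5 n B i, those of
   the encoding items 3 i' B each; together they give 9 n B (0 + 1 + ... + (t - 1)) = 9 n B C(t,2),
   so the profit is exactly P. *)

lemma lg_power2 [simp]: "lg (2 ^ m) = m"
  unfolding lg_def by simp

lemma sum_bit_power2:
  fixes i :: nat
  assumes "i < 2 ^ L"
  shows "(\<Sum>k<L. of_bool (bit i k) * 2 ^ k) = (of_nat i :: 'a::comm_semiring_1)"
proof -
  have "i = (\<Sum>k<L. of_bool (bit i k) * 2 ^ k)"
    using take_bit_sum[of L i] take_bit_nat_eq_self[OF assms]
    by (simp add: push_bit_eq_mult lessThan_atLeast0 mult.commute)
  then have "(of_nat i :: 'a) = of_nat (\<Sum>k<L. of_bool (bit i k) * 2 ^ k)" by simp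
  then show ?thesis by simp
qed

lemma double_sum_greaterThanLessThan:
  fixes i t :: nat
  assumes "i < t"
  shows "2 * \<Sum>{i<..<t} + i * (i + 1) = 2 * (t choose 2)"
proof -
  have "{..<t} = {..i} \<union> {i<..<t}" using assms by auto
  moreover have "\<Sum>({..i} \<union> {i<..<t}) = \<Sum>{..i} + \<Sum>{i<..<t}"
    by (rule sum.union_disjoint) auto
  moreover have "2 * \<Sum>{..i} = i * (i + 1)"
    using double_gauss_sum[of i, where 'a = nat] by (simp add: atMost_atLeast0)
  moreover have "\<Sum>{..<t} = t choose 2"
    using Sum_Ico_nat[of 0 t] by (simp add: lessThan_atLeast0 choose_two)
  ultimately show ?thesis by simp
qed

lemma sum_image_by_fibers:
  assumes "finite A" and "\<And>x. x \<in> A \<Longrightarrow> (\<Sum>y\<in>{y \<in> A. h y = h x}. g y) = G (h x)"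
  shows "sum G (h ` A) = sum g A"
  using assms by (simp add: sum.image_gen[of A g h]) (rule sum.cong; auto)

definition encoding_selection :: "nat \<Rightarrow> nat \<Rightarrow> nat \<Rightarrow> nat set \<Rightarrow> item set" where
  "encoding_selection n t i J = (\<lambda>(i', j). XI i' j) ` ({i<..<t} \<times> {1..3*n}) \<union> XI i ` J"

definition index_selection :: "nat \<Rightarrow> nat \<Rightarrow> item set" where
  "index_selection t i = (\<lambda>k. if bit i k then Z1 k else Z0 k) ` {..<lg t}"

definition bit_pairs :: "nat \<Rightarrow> nat \<Rightarrow> (nat \<times> nat) set" where
  "bit_pairs L i = {(k, l). k < L \<and> l < L \<and> bit i k}"

(* The item paying for the summand 3 ^ f (k, l) * Y of a row k with bit k of i set; if bit l
   is set as well, the pairs (k, l) and (l, k) share one item y^{1,1}. *)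
definition quadratization_item :: "nat \<Rightarrow> nat \<times> nat \<Rightarrow> item" where
  "quadratization_item i = (\<lambda>(k, l).
     if k = l then Y11 k k
     else if k < l then (if bit i l then Y11 k l else Y10 k l)
     else (if bit i l then Y11 l k else Y01 l k))"

definition quadratization_selection :: "nat \<Rightarrow> nat \<Rightarrow> item set" where
  "quadratization_selection t i = quadratization_item i ` bit_pairs (lg t) i"

lemma finite_bit_pairs: "finite (bit_pairs L i)"
  by (rule finite_subset[of _ "{..<L} \<times> {..<L}"]) (auto simp: bit_pairs_def)

lemma sum_bit_pairs:
  fixes h :: "nat \<times> nat \<Rightarrow> 'a::comm_semiring_1"
  shows "(\<Sum>q\<in>bit_pairs L i. h q) = (\<Sum>k<L. of_bool (bit i k) * (\<Sum>l<L. h (k, l)))"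
proof -
  have "bit_pairs L i = Sigma {k \<in> {..<L}. bit i k} (\<lambda>_. {..<L})"
    by (auto simp: bit_pairs_def)
  then have "(\<Sum>q\<in>bit_pairs L i. h q) = (\<Sum>k\<in>{k \<in> {..<L}. bit i k}. \<Sum>l<L. h (k, l))"
    by (simp add: sum.Sigma)
  also have "\<dots> = (\<Sum>k<L. if bit i k then \<Sum>l<L. h (k, l) else 0)"
    by (simp only: sum.inter_filter[OF finite_lessThan])
  also have "\<dots> = (\<Sum>k<L. of_bool (bit i k) * (\<Sum>l<L. h (k, l)))"
    by (rule sum.cong) auto
  finally show ?thesis .
qed

lemma quadratization_item_fiber:
  assumes "(k, l) \<in> bit_pairs L i"
  shows "{q \<in> bit_pairs L i. quadratization_item i q = quadratization_item i (k, l)}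
       = (if k \<noteq> l \<and> bit i l then {(k, l), (l, k)} else {(k, l)})"
  using assms unfolding bit_pairs_def quadratization_item_def by (auto split: if_splits)

lemma sum_bit_pairs_surplus:
  assumes "i < 2 ^ L"
  shows "(\<Sum>(k, l)\<in>bit_pairs L i. 3 * of_bool (bit i l) * 2 ^ (k + l) + (if k = l then 2 ^ k else 0))
       = 3 * real i ^ 2 + real i"
proof -
  define \<beta> where "\<beta> k = (of_bool (bit i k) :: real)" for k
  have expansion: "(\<Sum>k<L. \<beta> k * 2 ^ k) = real i"
    unfolding \<beta>_def by (rule sum_bit_power2[OF assms])
  have row: "(\<Sum>l<L. 3 * \<beta> l * 2 ^ (k + l) + (if k = l then 2 ^ k else 0))
      = 3 * 2 ^ k * (\<Sum>l<L. \<beta> l * 2 ^ l) + (2 ^ k :: real)" if "k < L" for k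
    using that by (simp add: sum.distrib sum_distrib_left power_add algebra_simps)
  have "(\<Sum>(k, l)\<in>bit_pairs L i. 3 * \<beta> l * 2 ^ (k + l) + (if k = l then 2 ^ k else 0))
      = (\<Sum>k<L. \<beta> k * (\<Sum>l<L. 3 * \<beta> l * 2 ^ (k + l) + (if k = l then 2 ^ k else 0)))"
    by (simp only: sum_bit_pairs \<beta>_def[symmetric] prod.case)
  also have "\<dots> = (\<Sum>k<L. \<beta> k * (3 * 2 ^ k * (\<Sum>l<L. \<beta> l * 2 ^ l) + 2 ^ k))"
    by (simp add: row)
  also have "\<dots> = 3 * (\<Sum>k<L. \<beta> k * 2 ^ k) * (\<Sum>l<L. \<beta> l * 2 ^ l) + (\<Sum>k<L. \<beta> k * 2 ^ k)"
    by (simp add: sum.distrib sum_distrib_left sum_distrib_right algebra_simps)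
  also have "\<dots> = 3 * real i ^ 2 + real i"
    unfolding expansion by (simp add: power2_eq_square)
  finally show ?thesis unfolding \<beta>_def .
qed

lemma sum_weight_quadratization_selection:
  "sum (weight n t a f) (quadratization_selection t i)
     = (\<Sum>k<lg t. of_bool (bit i k) * (\<Sum>l<lg t. 3 ^ f (k, l))) * cY n t"
proof -
  have "sum (weight n t a f) (quadratization_selection t i)
      = (\<Sum>q\<in>bit_pairs (lg t) i. 3 ^ f q * cY n t)"
    unfolding quadratization_selection_def
  proof (rule sum_image_by_fibers[OF finite_bit_pairs])
    fix p assume p: "p \<in> bit_pairs (lg t) i"
    obtain k l where kl: "p = (k, l)" by fastforce
    show "(\<Sum>q\<in>{q \<in> bit_pairs (lg t) i. quadratization_item i q = quadratization_item i p}.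
            3 ^ f q * cY n t)
        = weight n t a f (quadratization_item i p)"
      unfolding kl quadratization_item_fiber[OF p[unfolded kl]]
      by (cases "k < l"; cases "k = l"; cases "bit i l")
        (simp_all add: quadratization_item_def algebra_simps)
  qed
  then show ?thesis by (simp add: sum_bit_pairs sum_distrib_left sum_distrib_right mult.assoc)
qed

lemma sum_profit_quadratization_selection:
  assumes "i < 2 ^ lg t"
  shows "sum (profit n t a f) (quadratization_selection t i)
     = sum (weight n t a f) (quadratization_selection t i)
       + 1.5 * real n * cB n t * (3 * real i ^ 2 + real i)"
proof -
  define surplus where "surplus q = 1.5 * real n * cB n t *
    (case q of (k, l) \<Rightarrow> 3 * of_bool (bit i l) * 2 ^ (k + l) + (if k = l then 2 ^ k else 0))" for q
  have "(\<Sum>x\<in>quadratization_selection t i. profit n t a f x - weight n t a f x)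
      = sum surplus (bit_pairs (lg t) i)"
    unfolding quadratization_selection_def
  proof (rule sum_image_by_fibers[OF finite_bit_pairs])
    fix p assume p: "p \<in> bit_pairs (lg t) i"
    obtain k l where kl: "p = (k, l)" by fastforce
    have "bit i k" using p by (simp add: kl bit_pairs_def)
    then show "sum surplus {q \<in> bit_pairs (lg t) i. quadratization_item i q = quadratization_item i p}
        = profit n t a f (quadratization_item i p) - weight n t a f (quadratization_item i p)"
      unfolding kl quadratization_item_fiber[OF p[unfolded kl]]
      by (cases "k < l"; cases "k = l"; cases "bit i l")
        (simp_all add: quadratization_item_def surplus_def power_add power_mult power2_eq_square
          algebra_simps)
  qed
  also have "\<dots> = 1.5 * real n * cB n t * (3 * real i ^ 2 + real i)"
    unfolding surplus_def sum_distrib_left[symmetric] sum_bit_pairs_surplus[OF assms] ..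
  finally show ?thesis unfolding sum_subtractf by linarith
qed

lemma sum_weight_index_selection:
  assumes "i < 2 ^ lg t"
  shows "sum (weight n t a f) (index_selection t i)
     = (2 ^ lg t - 1) * cZ n t + 3 * real i * cB n t
       + (\<Sum>k<lg t. (1 - of_bool (bit i k)) * (\<Sum>l<lg t. 3 ^ f (k, l))) * cY n t"
proof -
  have inj: "inj_on (\<lambda>k. if bit i k then Z1 k else Z0 k) {..<lg t}"
    by (auto simp: inj_on_def split: if_splits)
  have "sum (weight n t a f) (index_selection t i)
      = (\<Sum>k<lg t. 2 ^ k * cZ n t + of_bool (bit i k) * 2 ^ k * 3 * cB n t
          + (1 - of_bool (bit i k)) * (\<Sum>l<lg t. 3 ^ f (k, l)) * cY n t)"
    unfolding index_selection_def sum.reindex[OF inj]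
    by (intro sum.cong refl) (simp add: sum_distrib_right)
  also have "\<dots> = (\<Sum>k<lg t. 2 ^ k) * cZ n t + (\<Sum>k<lg t. of_bool (bit i k) * 2 ^ k) * 3 * cB n t
          + (\<Sum>k<lg t. (1 - of_bool (bit i k)) * (\<Sum>l<lg t. 3 ^ f (k, l))) * cY n t"
    by (simp only: sum.distrib sum_distrib_right)
  finally show ?thesis
    by (simp add: sum_bit_power2[OF assms] geometric_sum)
qed

lemma sum_profit_index_selection:
  "sum (profit n t a f) (index_selection t i) = sum (weight n t a f) (index_selection t i)"
  by (rule sum.cong) (auto simp: index_selection_def)

lemma sum_power3_pairs_eq_cT:
  assumes "bij_betw f ({0..<lg t} \<times> {0..<lg t}) {0..<(lg t)^2}"
  shows "(\<Sum>k<lg t. \<Sum>l<lg t. 3 ^ f (k, l)) = cT t"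
proof -
  have "(\<Sum>k<lg t. \<Sum>l<lg t. 3 ^ f (k, l)) = (\<Sum>p\<in>{0..<lg t} \<times> {0..<lg t}. (3::real) ^ f p)"
    by (simp add: sum.cartesian_product lessThan_atLeast0)
  also have "\<dots> = (\<Sum>m\<in>{0..<(lg t)^2}. 3 ^ m)"
    using assms by (rule sum.reindex_bij_betw)
  finally show ?thesis by (simp add: cT_def lessThan_atLeast0)
qed

lemma sum_weight_quadratization_index_selection:
  assumes "bij_betw f ({0..<lg t} \<times> {0..<lg t}) {0..<(lg t)^2}" and "i < 2 ^ lg t"
  shows "sum (weight n t a f) (quadratization_selection t i)
       + sum (weight n t a f) (index_selection t i)
     = (2 ^ lg t - 1) * cZ n t + cT t * cY n t + 3 * real i * cB n t"
proof -
  have "(\<Sum>k<lg t. of_bool (bit i k) * (\<Sum>l<lg t. 3 ^ f (k, l)))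
      + (\<Sum>k<lg t. (1 - of_bool (bit i k)) * (\<Sum>l<lg t. 3 ^ f (k, l))) = cT t"
    (is "?set + ?unset = _")
    unfolding sum_power3_pairs_eq_cT[OF assms(1), symmetric] sum.distrib[symmetric]
    by (simp add: algebra_simps)
  then have "?set * cY n t + ?unset * cY n t = cT t * cY n t"
    by (simp only: distrib_right[symmetric])
  then show ?thesis
    unfolding sum_weight_quadratization_selection sum_weight_index_selection[OF assms(2)]
    by linarith
qed

lemma sum_encoding_selection:
  fixes h :: "item \<Rightarrow> real"
  assumes "finite J"
  shows "sum h (encoding_selection n t i J)
     = (\<Sum>i'\<in>{i<..<t}. \<Sum>j=1..3*n. h (XI i' j)) + (\<Sum>j\<in>J. h (XI i j))"
proof -
  have "inj_on (\<lambda>(i', j). XI i' j) ({i<..<t} \<times> {1..3*n})" and "inj_on (XI i) J"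
    by (auto simp: inj_on_def)
  moreover have "(\<lambda>(i', j). XI i' j) ` ({i<..<t} \<times> {1..3*n}) \<inter> XI i ` J = {}"
    by auto
  ultimately show ?thesis
    using assms unfolding encoding_selection_def
    by (simp add: sum.union_disjoint sum.reindex sum.cartesian_product case_prod_unfold)
qed

lemma sum_weight_encoding_selection:
  assumes "\<forall>i'<t. RSS_instance n (a i')" and "i < t"
    and "finite J" and "card J = n" and "(\<Sum>j\<in>J. a i j) = Bn n"
  shows "sum (weight n t a f) (encoding_selection n t i J) = (3 * (real t - real i) - 2) * cB n t"
proof -
  have row: "(\<Sum>j=1..3*n. weight n t a f (XI i' j)) = 3 * real n * cX n t + 3 * real (Bn n)"
    if "i' \<in> {i<..<t}" for i'
  proof -
    have "(\<Sum>j=1..3*n. a i' j) = 3 * Bn n"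
      using assms(1) that unfolding RSS_instance_def by auto
    then show ?thesis by (simp add: sum.distrib flip: of_nat_sum)
  qed
  have "(\<Sum>i'\<in>{i<..<t}. \<Sum>j=1..3*n. weight n t a f (XI i' j))
      = (\<Sum>i'\<in>{i<..<t}. 3 * real n * cX n t + 3 * real (Bn n))"
    by (rule sum.cong[OF refl row])
  also have "\<dots> = (real t - real i - 1) * (3 * real n * cX n t + 3 * real (Bn n))"
    using assms(2) by (simp add: of_nat_diff)
  moreover have "(\<Sum>j\<in>J. weight n t a f (XI i j)) = real n * cX n t + real (Bn n)"
    using assms(4,5) by (simp add: sum.distrib flip: of_nat_sum)
  ultimately show ?thesis
    unfolding sum_encoding_selection[OF assms(3)] by (simp add: cB_def algebra_simps)
qed

lemma sum_profit_encoding_selection: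
  assumes "finite J" and "card J = n"
  shows "sum (profit n t a f) (encoding_selection n t i J)
     = sum (weight n t a f) (encoding_selection n t i J)
       + 3 * real n * cB n t * (real i + 3 * real (\<Sum>{i<..<t}))"
proof -
  have "(\<Sum>x\<in>encoding_selection n t i J. profit n t a f x - weight n t a f x)
      = (\<Sum>i'\<in>{i<..<t}. \<Sum>j=1..3*n. 3 * real i' * cB n t) + (\<Sum>j\<in>J. 3 * real i * cB n t)"
    by (simp add: sum_encoding_selection[OF assms(1)])
  also have "\<dots> = 3 * real n * cB n t * (real i + 3 * real (\<Sum>{i<..<t}))"
    using assms(2) by (simp add: of_nat_sum sum_distrib_left sum_distrib_right algebra_simps)
  finally show ?thesis unfolding sum_subtractf by linarith
qed

lemma encoding_selection_subset:
  "i < t \<Longrightarrow> J \<subseteq> {1..3*n} \<Longrightarrow> encoding_selection n t i J \<subseteq> Xitems n t"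
  by (auto simp: encoding_selection_def Xitems_def)

lemma quadratization_selection_subset: "quadratization_selection t i \<subseteq> Yitems t"
proof
  fix y assume "y \<in> quadratization_selection t i"
  then obtain k l where "k < lg t" "l < lg t" "y = quadratization_item i (k, l)"
    by (auto simp: quadratization_selection_def bit_pairs_def)
  then show "y \<in> Yitems t"
    by (cases "k < l"; cases "k = l"; cases "bit i l")
      (auto simp: quadratization_item_def Yitems_def)
qed

lemma index_selection_subset: "index_selection t i \<subseteq> Zitems t"
  by (auto simp: index_selection_def Zitems_def)

lemma total_surplus_eq_choose_two:
  assumes "i < t"
  shows "3 * (real i + 3 * real (\<Sum>{i<..<t})) + 1.5 * (3 * real i ^ 2 + real i)
       = 9 * real (t choose 2)"
proof -
  have "2 * real (\<Sum>{i<..<t}) + real i * (real i + 1) = 2 * real (t choose 2)"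
    using arg_cong[OF double_sum_greaterThanLessThan[OF assms], of real]
    by (simp add: algebra_simps)
  then show ?thesis by (simp add: power2_eq_square algebra_simps)
qed

definition solution :: "nat \<Rightarrow> nat \<Rightarrow> nat \<Rightarrow> nat set \<Rightarrow> item set" where
  "solution n t i J
     = encoding_selection n t i J \<union> quadratization_selection t i \<union> index_selection t i"

lemma solution_subset:
  assumes "i < t" and "J \<subseteq> {1..3*n}"
  shows "solution n t i J \<subseteq> Xitems n t \<union> Yitems t \<union> Zitems t"
  using encoding_selection_subset[OF assms] quadratization_selection_subset index_selection_subset
  unfolding solution_def by blast

lemma sum_solution:
  fixes h :: "item \<Rightarrow> real"
  assumes "i < t" and "J \<subseteq> {1..3*n}"
  shows "sum h (solution n t i J)
     = sum h (encoding_selection n t i J) + sum h (quadratization_selection t i)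
       + sum h (index_selection t i)"
proof -
  have "finite J" using assms(2) by (rule finite_subset) simp
  then have "finite (encoding_selection n t i J)" "finite (quadratization_selection t i)"
    "finite (index_selection t i)"
    using finite_bit_pairs
    by (simp_all add: encoding_selection_def quadratization_selection_def index_selection_def)
  moreover have "encoding_selection n t i J \<inter> quadratization_selection t i = {}"
    "(encoding_selection n t i J \<union> quadratization_selection t i) \<inter> index_selection t i = {}"
    using encoding_selection_subset[OF assms] quadratization_selection_subset index_selection_subset
    by (fastforce simp: Xitems_def Yitems_def Zitems_def)+
  ultimately show ?thesis
    unfolding solution_def by (simp add: sum.union_disjoint)
qed

lemma sum_weight_solution:
  assumes "t = 2 ^ lg t" and "\<forall>i'<t. RSS_instance n (a i')"
    and "bij_betw f ({0..<lg t} \<times> {0..<lg t}) {0..<(lg t)^2}" and "i < t"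
    and "J \<subseteq> {1..3*n}" and "card J = n" and "(\<Sum>j\<in>J. a i j) = Bn n"
  shows "sum (weight n t a f) (solution n t i J) = cW n t"
proof -
  have i: "i < 2 ^ lg t" using assms(1,4) by simp
  have t: "2 ^ lg t = real t" using assms(1) by (metis of_nat_numeral of_nat_power)
  have "finite J" using assms(5) by (rule finite_subset) simp
  then have "sum (weight n t a f) (encoding_selection n t i J)
      = (3 * (real t - real i) - 2) * cB n t"
    using assms(2,4,6,7) by (intro sum_weight_encoding_selection)
  moreover have "sum (weight n t a f) (quadratization_selection t i)
      + sum (weight n t a f) (index_selection t i)
      = (real t - 1) * cZ n t + cT t * cY n t + 3 * real i * cB n t"
    unfolding sum_weight_quadratization_index_selection[OF assms(3) i] t ..
  ultimately show ?thesis
    unfolding sum_solution[OF assms(4,5)] cW_def by (simp add: algebra_simps)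
qed

lemma sum_profit_solution:
  assumes "t = 2 ^ lg t" and "\<forall>i'<t. RSS_instance n (a i')"
    and "bij_betw f ({0..<lg t} \<times> {0..<lg t}) {0..<(lg t)^2}" and "i < t"
    and "J \<subseteq> {1..3*n}" and "card J = n" and "(\<Sum>j\<in>J. a i j) = Bn n"
  shows "sum (profit n t a f) (solution n t i J) = cP n t"
proof -
  have i: "i < 2 ^ lg t" using assms(1,4) by simp
  have "finite J" using assms(5) by (rule finite_subset) simp
  have "sum (profit n t a f) (solution n t i J) = sum (weight n t a f) (solution n t i J)
      + real n * cB n t * (3 * (real i + 3 * real (\<Sum>{i<..<t})) + 1.5 * (3 * real i ^ 2 + real i))"
    unfolding sum_solution[OF assms(4,5)] sum_profit_encoding_selection[OF \<open>finite J\<close> assms(6)]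
      sum_profit_quadratization_selection[OF i] sum_profit_index_selection
    by (simp add: field_simps)
  then show ?thesis
    unfolding sum_weight_solution[OF assms] total_surplus_eq_choose_two[OF assms(4)] cP_def
    by (simp add: algebra_simps)
qed

theorem lemma7:
  fixes n t i :: nat and a :: "nat \<Rightarrow> nat \<Rightarrow> nat" and f :: "nat \<times> nat \<Rightarrow> nat"
  assumes "n \<ge> 1"
    and "\<exists>m. t = 2 ^ m"
    and "\<forall>i'<t. RSS_instance n (a i')"
    and "bij_betw f ({0..<lg t} \<times> {0..<lg t}) {0..<(lg t)^2}"
    and "i < t"
    and "RSS_yes n (a i)"
  shows "\<exists>S. S \<subseteq> Xitems n t \<union> Yitems t \<union> Zitems t
           \<and> (\<Sum>x\<in>S. weight n t a f x) \<le> cW n t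
           \<and> (\<Sum>x\<in>S. profit n t a f x) \<ge> cP n t"
proof -
  have t: "t = 2 ^ lg t" using assms(2) by auto
  obtain J where J: "J \<subseteq> {1..3*n}" "card J = n" "(\<Sum>j\<in>J. a i j) = Bn n"
    using assms(6) unfolding RSS_yes_def by blast
  show ?thesis
    using solution_subset[OF assms(5) J(1)]
      sum_weight_solution[OF t assms(3-5) J] sum_profit_solution[OF t assms(3-5) J]
    by (intro exI[of _ "solution n t i J"]) simp
qed

end
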